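(* Let $B$ be any closed Euclidean ball in $\mathbb R^n$, let $S^*$ be a regular simplex inscribed into $B$, and let $P^*:C(B)\to\Pi_1(\mathbb R^n)$ be the interpolation projector with nodes at the vertices of $S^*$. Define $\psi(t)=\frac{2\sqrt n}{n+1}\big(t(n+1-t)\big)^{1/2}+\big|1-\frac{2t}{n+1}\big|$ for $0\le t\le n+1$, and $a=\big\lfloor\frac{n+1}2-\frac{\sqrt{n+1}}2\big\rfloor$. Then $$\|P^*\|_B=\max\{\psi(a),\psi(a+1)\},\qquad \sqrt n\le\|P^*\|_B\le\sqrt{n+1}.$$ Moreover, $\|P^*\|_B=\sqrt n$ only for $n=1$, and $\|P^*\|_B=\sqrt{n+1}$ if and only if $\sqrt{n+1}$ is an integer.
   Context: $C(B)$ is the space of continuous functions on $B$ with sup norm; $\Pi_1(\mathbb R^n)$ is the space of polynomials of degree $\le1$. The interpolation projector with nodes $x^{(1)},\dots,x^{(n+1)}$ (vertices of a nondegenerate simplex) maps $f$ to the unique $p\in\Pi_1(\mathbb R^n)$ with $p(x^{(j)})=f(x^{(j)})$; $\|P\|_B$ is its operator norm. A simplex is inscribed into $B$ if its vertices lie on the boundary sphere of $B$. *)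

theory Defs
  imports "HOL-Analysis.Analysis"
begin

definition Pi1 :: "(real^'n \<Rightarrow> real) set" where
  "Pi1 = {p. \<exists>a b. p = (\<lambda>x. a \<bullet> x + b)}"

definition nondeg_simplex :: "(nat \<Rightarrow> real^'n) \<Rightarrow> bool" where
  "nondeg_simplex x \<longleftrightarrow> inj_on x {..CARD('n)} \<and> \<not> affine_dependent (x ` {..CARD('n)})"

definition regular_simplex :: "(nat \<Rightarrow> real^'n) \<Rightarrow> bool" where
  "regular_simplex x \<longleftrightarrow> nondeg_simplex x \<and>
     (\<forall>i\<le>CARD('n). \<forall>j\<le>CARD('n). \<forall>k\<le>CARD('n). \<forall>l\<le>CARD('n).
        i \<noteq> j \<longrightarrow> k \<noteq> l \<longrightarrow> dist (x i) (x j) = dist (x k) (x l))"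

definition inscribed :: "(nat \<Rightarrow> real^'n) \<Rightarrow> real^'n \<Rightarrow> real \<Rightarrow> bool" where
  "inscribed x c r \<longleftrightarrow> (\<forall>j\<le>CARD('n). x j \<in> sphere c r)"

definition interp :: "(nat \<Rightarrow> real^'n) \<Rightarrow> (real^'n \<Rightarrow> real) \<Rightarrow> (real^'n \<Rightarrow> real)" where
  "interp x f = (THE p. p \<in> Pi1 \<and> (\<forall>j\<le>CARD('n). p (x j) = f (x j)))"

definition proj_norm :: "(nat \<Rightarrow> real^'n) \<Rightarrow> (real^'n) set \<Rightarrow> real" where
  "proj_norm x B = Sup {Sup ((\<lambda>y. \<bar>interp x f y\<bar>) ` B) | f.
      continuous_on B f \<and> (\<forall>y\<in>B. \<bar>f y\<bar> \<le> 1)}"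

definition psi :: "nat \<Rightarrow> real \<Rightarrow> real" where
  "psi n t = 2 * sqrt (real n) / (real n + 1) * sqrt (t * (real n + 1 - t))
             + \<bar>1 - 2 * t / (real n + 1)\<bar>"

end

(*
  Write v j = x j - c.  Regularity and inscription give v i . v j = -r^2/n for i ~= j and
  sum_j v j = 0, so the barycentric coordinates of the simplex are the explicit affine functions
  bary j y = (1 + n/r^2 * v j . (y - c)) / (n + 1) and the projector is
  P f = sum_j f (x j) * bary j.  For |f| <= 1, |P f y| <= sum_j |bary j y|, the value at y of the
  affine function with vertex values +1 on J = {j. bary j y >= 0} and -1 elsewhere.  By
  Cauchy-Schwarz the maximal modulus of that function on the ball is psi |J|, and a clipped copy of
  it attains this.  Hence the norm is the maximum of psi over the integers 0..n+1.

  With e = |(n+1)/2 - t| and p = sqrt (t (n+1-t)) one has p^2 + e^2 = ((n+1)/2)^2 and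
  (n+1)/2 * psi t = sqrt n * p + e.  Along this arc the weighted sum increases in e while
  p >= sqrt n * e, i.e. up to e = sqrt (n+1)/2, and decreases afterwards, so the integer maximum sits
  at a or a + 1.  Lagrange's identity bounds sqrt n * p + e by sqrt (n+1) * (n+1)/2, with equality
  iff (n+1-2t)^2 = n+1, which for t = a forces sqrt (n+1) to be an integer.  For n >= 2 one of
  a, a + 1 has e strictly between 0 and sqrt n, and there psi t > sqrt n.
*)
theory Submission
  imports Defs
begin

section \<open>The function psi\<close>

lemma weighted_circle_sum_mono:
  fixes s p1 p2 e1 e2 :: real
  assumes "p1^2 + e1^2 = p2^2 + e2^2" "0 \<le> p1" "0 \<le> p2" "0 \<le> e1" "e1 \<le> e2"
    "0 \<le> s" "s * e2 \<le> p2"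
  shows "s * p1 + e1 \<le> s * p2 + e2"
proof -
  have "p2^2 \<le> p1^2"
    using assms(1,4,5) power_mono[of e1 e2 2] by linarith
  then have "p2 \<le> p1"
    using assms(2) by (rule power2_le_imp_le)
  have diff: "(p1 - p2) * (p1 + p2) = (e2 - e1) * (e2 + e1)"
    using assms(1) by (simp add: power2_eq_square algebra_simps)
  have "s * e1 \<le> s * e2"
    using assms by (intro mult_left_mono)
  then have "s * (e2 + e1) \<le> p1 + p2"
    using assms \<open>p2 \<le> p1\<close> by (simp add: distrib_left)
  then have "(e2 - e1) * (s * (e2 + e1)) \<le> (e2 - e1) * (p1 + p2)"
    using assms(5) by (intro mult_left_mono) auto
  moreover have "(s * (p1 - p2)) * (p1 + p2) = (e2 - e1) * (s * (e2 + e1))"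
    using diff by (metis mult.assoc mult.left_commute)
  ultimately have "(s * (p1 - p2)) * (p1 + p2) \<le> (e2 - e1) * (p1 + p2)"
    by linarith
  moreover have "0 \<le> p1 + p2" using assms by simp
  ultimately have "s * (p1 - p2) \<le> e2 - e1 \<or> p1 = 0 \<and> p2 = 0"
    using assms(2,3) by (metis add_nonneg_eq_0_iff mult_right_le_imp_le order_le_less)
  then show ?thesis
    using assms(5) by (auto simp: algebra_simps)
qed

lemma weighted_circle_sum_antimono:
  fixes s p1 p2 e1 e2 :: real
  assumes "p1^2 + e1^2 = p2^2 + e2^2" "0 \<le> p1" "0 \<le> p2" "0 \<le> e1" "e1 \<le> e2"
    "0 \<le> s" "p1 \<le> s * e1"
  shows "s * p2 + e2 \<le> s * p1 + e1"
proof -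
  have "p2^2 \<le> p1^2"
    using assms(1,4,5) power_mono[of e1 e2 2] by linarith
  then have "p2 \<le> p1"
    using assms(2) by (rule power2_le_imp_le)
  have diff: "(p1 - p2) * (p1 + p2) = (e2 - e1) * (e2 + e1)"
    using assms(1) by (simp add: power2_eq_square algebra_simps)
  have "s * e1 \<le> s * e2"
    using assms by (intro mult_left_mono)
  then have "p1 + p2 \<le> s * (e2 + e1)"
    using assms \<open>p2 \<le> p1\<close> by (simp add: distrib_left)
  then have "(e2 - e1) * (p1 + p2) \<le> (e2 - e1) * (s * (e2 + e1))"
    using assms(5) by (intro mult_left_mono) auto
  moreover have "(s * (p1 - p2)) * (p1 + p2) = (e2 - e1) * (s * (e2 + e1))"
    using diff by (metis mult.assoc mult.left_commute)
  ultimately have "(e2 - e1) * (p1 + p2) \<le> (s * (p1 - p2)) * (p1 + p2)"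
    by linarith
  moreover have "0 \<le> p1 + p2" using assms by simp
  ultimately have "e2 - e1 \<le> s * (p1 - p2) \<or> p1 = 0 \<and> p2 = 0"
    using assms(2,3) by (metis add_nonneg_eq_0_iff mult_right_le_imp_le order_le_less)
  moreover have "e1 = e2" if "p1 = 0" "p2 = 0"
    using assms(1,4,5) that by (simp add: power2_eq_iff_nonneg)
  ultimately show ?thesis
    by (auto simp: algebra_simps)
qed

lemma arc_circle:
  assumes "0 \<le> t" "t \<le> m"
  shows "sqrt (t * (m - t))^2 + \<bar>m / 2 - t\<bar>^2 = (m / 2)^2"
proof -
  have "sqrt (t * (m - t))^2 = t * (m - t)"
    using assms by simp
  then show ?thesis
    by (simp add: power2_eq_square algebra_simps)
qed

lemma psi_eq_arc:
  assumes "0 \<le> t" "t \<le> real n + 1"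
  shows "(real n + 1) / 2 * psi n t
    = sqrt (real n) * sqrt (t * (real n + 1 - t)) + \<bar>(real n + 1) / 2 - t\<bar>"
proof -
  define m where "m = real n + 1"
  have "0 < m"
    unfolding m_def by simp
  then have "m / 2 * (1 - 2 * t / m) = m / 2 - t"
    by (simp add: field_simps)
  then have "m / 2 * \<bar>1 - 2 * t / m\<bar> = \<bar>m / 2 - t\<bar>"
    using \<open>0 < m\<close> by (metis abs_mult abs_of_pos half_gt_zero)
  then show ?thesis
    unfolding psi_def m_def by (simp add: distrib_left)
qed

lemma psi_arc_defect:
  assumes "0 \<le> t" "t \<le> real n + 1"
  shows "(sqrt (t * (real n + 1 - t)) - sqrt (real n) * \<bar>(real n + 1) / 2 - t\<bar>)^2
    = ((real n + 1) / 2 * sqrt (real n + 1))^2 - ((real n + 1) / 2 * psi n t)^2"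
proof -
  define m p e where "m = real n + 1" and "p = sqrt (t * (m - t))" and "e = \<bar>m / 2 - t\<bar>"
  have psi: "m / 2 * psi n t = sqrt (real n) * p + e"
    using psi_eq_arc[OF assms] unfolding m_def p_def e_def .
  have "(sqrt (real n) * p + e)^2 + (p - sqrt (real n) * e)^2 = m * (p^2 + e^2)"
    unfolding m_def by (simp add: power2_eq_square algebra_simps)
  also have "\<dots> = (m / 2 * sqrt m)^2"
    using arc_circle[of t m] assms unfolding m_def p_def e_def
    by (simp add: power_mult_distrib power2_eq_square)
  finally have "(p - sqrt (real n) * e)^2 = (m / 2 * sqrt m)^2 - (m / 2 * psi n t)^2"
    unfolding psi by linarith
  then show ?thesis
    unfolding m_def p_def e_def .
qed

lemma arc_diagonal_gap:
  fixes p e :: real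
  assumes "p^2 + e^2 = ((real n + 1) / 2)^2"
  shows "(sqrt (real n) * e)^2 - p^2 = (real n + 1) / 4 * ((2 * e)^2 - (real n + 1))"
proof -
  have "(sqrt (real n) * e)^2 = real n * e^2"
    by (simp add: power_mult_distrib)
  then show ?thesis
    using assms by (simp add: power2_eq_square field_simps)
qed

lemma arc_below_diagonal:
  fixes p e :: real
  assumes "p^2 + e^2 = ((real n + 1) / 2)^2" "0 \<le> e" "sqrt (real n + 1) \<le> 2 * e"
  shows "p \<le> sqrt (real n) * e"
proof -
  have "real n + 1 \<le> (2 * e)^2"
    using assms(3) by (rule sqrt_le_D)
  then have "0 \<le> (real n + 1) / 4 * ((2 * e)^2 - (real n + 1))"
    by simp
  then have "p^2 \<le> (sqrt (real n) * e)^2"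
    using arc_diagonal_gap[OF assms(1)] by linarith
  moreover have "0 \<le> sqrt (real n) * e"
    using assms(2) by simp
  ultimately show ?thesis
    by (rule power2_le_imp_le)
qed

lemma arc_above_diagonal:
  fixes p e :: real
  assumes "p^2 + e^2 = ((real n + 1) / 2)^2" "0 \<le> e" "0 \<le> p" "2 * e \<le> sqrt (real n + 1)"
  shows "sqrt (real n) * e \<le> p"
proof -
  have "\<bar>2 * e\<bar> \<le> sqrt (real n + 1)"
    using assms(2,4) by simp
  then have "(2 * e)^2 \<le> real n + 1"
    by (rule sqrt_ge_absD)
  then have "(real n + 1) / 4 * ((2 * e)^2 - (real n + 1)) \<le> 0"
    by (intro mult_nonneg_nonpos) simp_all
  then have "(sqrt (real n) * e)^2 \<le> p^2"
    using arc_diagonal_gap[OF assms(1)] by linarith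
  then show ?thesis
    using assms(3) by (rule power2_le_imp_le)
qed

lemma sqrt_Suc_le: "sqrt (real n + 1) \<le> real n + 1"
proof -
  have "real n + 1 \<le> (real n + 1)^2"
    by (simp add: power2_eq_square)
  then show ?thesis
    by (simp add: real_sqrt_le_iff')
qed

lemma psi_symmetric: "psi n (real n + 1 - t) = psi n t"
proof -
  have "\<bar>1 - 2 * (real n + 1 - t) / (real n + 1)\<bar> = \<bar>1 - 2 * t / (real n + 1)\<bar>"
    by (simp add: field_simps abs_minus_commute)
  then show ?thesis
    unfolding psi_def by (simp add: mult.commute)
qed

lemma psi_mono_below_peak:
  assumes "0 \<le> t1" "t1 \<le> t2" "t2 \<le> (real n + 1 - sqrt (real n + 1)) / 2"
  shows "psi n t1 \<le> psi n t2"
proof -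
  define m p1 p2 e1 e2 where "m = real n + 1"
    and "p1 = sqrt (t1 * (m - t1))" and "p2 = sqrt (t2 * (m - t2))"
    and "e1 = \<bar>m / 2 - t1\<bar>" and "e2 = \<bar>m / 2 - t2\<bar>"
  have "2 * t2 \<le> m - sqrt m" "0 \<le> sqrt m"
    using assms(3) unfolding m_def by (simp_all add: field_simps)
  then have "t2 \<le> m / 2" "sqrt m \<le> 2 * (m / 2 - t2)"
    by argo+
  then have "0 \<le> e2" "e2 \<le> e1" "sqrt m \<le> 2 * e2" "t2 \<le> m"
    using assms(1,2) unfolding e1_def e2_def by auto
  moreover have "p1^2 + e1^2 = (m / 2)^2" "p2^2 + e2^2 = (m / 2)^2" "0 \<le> p1" "0 \<le> p2"
    using arc_circle[of t1 m] arc_circle[of t2 m] assms calculation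
    unfolding p1_def p2_def e1_def e2_def by simp_all
  ultimately have "sqrt (real n) * p1 + e1 \<le> sqrt (real n) * p2 + e2"
    by (intro weighted_circle_sum_antimono arc_below_diagonal) (simp_all add: m_def)
  moreover have "m / 2 * psi n t1 = sqrt (real n) * p1 + e1" "m / 2 * psi n t2 = sqrt (real n) * p2 + e2"
    using psi_eq_arc[of t1 n] psi_eq_arc[of t2 n] assms \<open>t2 \<le> m\<close>
    unfolding p1_def p2_def e1_def e2_def m_def by simp_all
  ultimately have "m / 2 * psi n t1 \<le> m / 2 * psi n t2"
    by (simp only:)
  then show ?thesis
    unfolding m_def by simp
qed

lemma psi_antimono_above_peak:
  assumes "(real n + 1 - sqrt (real n + 1)) / 2 \<le> t1" "t1 \<le> t2" "t2 \<le> (real n + 1) / 2"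
  shows "psi n t2 \<le> psi n t1"
proof -
  define m p1 p2 e1 e2 where "m = real n + 1"
    and "p1 = sqrt (t1 * (m - t1))" and "p2 = sqrt (t2 * (m - t2))"
    and "e1 = \<bar>m / 2 - t1\<bar>" and "e2 = \<bar>m / 2 - t2\<bar>"
  have "0 \<le> t1" "2 * (m / 2 - t1) \<le> sqrt m"
    using assms(1) sqrt_Suc_le[of n] unfolding m_def by (simp_all add: field_simps)
  then have "0 \<le> e2" "e2 \<le> e1" "2 * e1 \<le> sqrt m" "t2 \<le> m"
    using assms(2,3) unfolding e1_def e2_def m_def by auto
  moreover have "p1^2 + e1^2 = (m / 2)^2" "p2^2 + e2^2 = (m / 2)^2" "0 \<le> p1" "0 \<le> p2"
    using arc_circle[of t1 m] arc_circle[of t2 m] assms calculation \<open>0 \<le> t1\<close>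
    unfolding p1_def p2_def e1_def e2_def by simp_all
  ultimately have "sqrt (real n) * p2 + e2 \<le> sqrt (real n) * p1 + e1"
    by (intro weighted_circle_sum_mono arc_above_diagonal) (simp_all add: m_def)
  moreover have "m / 2 * psi n t1 = sqrt (real n) * p1 + e1" "m / 2 * psi n t2 = sqrt (real n) * p2 + e2"
    using psi_eq_arc[of t1 n] psi_eq_arc[of t2 n] assms \<open>0 \<le> t1\<close> \<open>t2 \<le> m\<close>
    unfolding p1_def p2_def e1_def e2_def m_def by simp_all
  ultimately have "m / 2 * psi n t2 \<le> m / 2 * psi n t1"
    by (simp only:)
  then show ?thesis
    unfolding m_def by simp
qed

lemma psi_le_sqrt:
  assumes "0 \<le> t" "t \<le> real n + 1"
  shows "psi n t \<le> sqrt (real n + 1)"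
proof -
  have "((real n + 1) / 2 * psi n t)^2 \<le> ((real n + 1) / 2 * sqrt (real n + 1))^2"
    using psi_arc_defect[OF assms] by (metis diff_ge_0_iff_ge zero_le_power2)
  then have "(real n + 1) / 2 * psi n t \<le> (real n + 1) / 2 * sqrt (real n + 1)"
    by (rule power2_le_imp_le) simp
  then show ?thesis
    by simp
qed

lemma psi_eq_sqrt_iff:
  assumes "0 \<le> t" "t \<le> real n + 1"
  shows "psi n t = sqrt (real n + 1) \<longleftrightarrow> (real n + 1 - 2 * t)^2 = real n + 1"
proof -
  define p e where "p = sqrt (t * (real n + 1 - t))" and "e = \<bar>(real n + 1) / 2 - t\<bar>"
  have "0 \<le> p"
    using assms unfolding p_def by simp
  have "(real n + 1 - 2 * t)^2 = (2 * e)^2"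
    unfolding e_def by (simp add: power2_eq_square algebra_simps)
  then have "(real n + 1 - 2 * t)^2 = real n + 1 \<longleftrightarrow> p^2 = (sqrt (real n) * e)^2"
    using arc_diagonal_gap[of p e n] arc_circle[of t "real n + 1"] assms
    unfolding p_def e_def by auto
  also have "\<dots> \<longleftrightarrow> p = sqrt (real n) * e"
    using \<open>0 \<le> p\<close> unfolding e_def by (simp add: power2_eq_iff_nonneg)
  also have "\<dots> \<longleftrightarrow> ((real n + 1) / 2 * psi n t)^2 = ((real n + 1) / 2 * sqrt (real n + 1))^2"
    using psi_arc_defect[OF assms] unfolding p_def e_def by auto
  also have "\<dots> \<longleftrightarrow> psi n t = sqrt (real n + 1)"
  proof -
    have "0 \<le> (real n + 1) / 2 * psi n t"
      using psi_eq_arc[OF assms] assms by simp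
    then show ?thesis
      by (simp add: power2_eq_iff_nonneg)
  qed
  finally show ?thesis
    by simp
qed

lemma sqrt_less_psi:
  assumes "0 \<le> t" "t \<le> real n + 1"
    and "0 < \<bar>(real n + 1) / 2 - t\<bar>" "\<bar>(real n + 1) / 2 - t\<bar> < sqrt (real n)"
  shows "sqrt (real n) < psi n t"
proof -
  define m s where "m = real n + 1" and "s = sqrt (real n)"
  define p e where "p = sqrt (t * (m - t))" and "e = \<bar>m / 2 - t\<bar>"
  have "0 \<le> p" and circle: "p^2 + e^2 = (m / 2)^2"
    using assms arc_circle[of t m] unfolding m_def p_def e_def by simp_all
  have psi: "m / 2 * psi n t = s * p + e"
    using psi_eq_arc[OF assms(1,2)] unfolding m_def p_def e_def s_def .
  have "0 < m" "s^2 = m - 1" "0 < e" "e < s"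
    using assms unfolding m_def s_def e_def by simp_all
  have "s * m / 2 - e < s * p"
  proof (cases "s * m / 2 - e < 0")
    case True
    moreover have "0 \<le> s * p"
      using \<open>0 \<le> p\<close> unfolding s_def by simp
    ultimately show ?thesis
      by linarith
  next
    case False
    have "(s * p)^2 = (m - 1) * ((m / 2)^2 - e^2)"
      using circle \<open>s^2 = m - 1\<close> by (simp add: power_mult_distrib)
    moreover have "(s * m / 2 - e)^2 = (m - 1) * (m / 2)^2 - s * m * e + e^2"
      using \<open>s^2 = m - 1\<close>[symmetric] by (simp add: power2_eq_square algebra_simps)
    ultimately have "(s * p)^2 - (s * m / 2 - e)^2 = m * e * (s - e)"
      by (simp add: power2_eq_square algebra_simps)
    moreover have "0 < m * e * (s - e)"
      using \<open>0 < m\<close> \<open>0 < e\<close> \<open>e < s\<close> by simp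
    ultimately have "(s * m / 2 - e)^2 < (s * p)^2"
      by linarith
    then show ?thesis
      by (rule power2_less_imp_less) (simp add: \<open>0 \<le> p\<close> s_def)
  qed
  then have "m / 2 * s < m / 2 * psi n t"
    unfolding psi by (simp add: mult.commute)
  then show ?thesis
    using \<open>0 < m\<close> unfolding s_def by simp
qed

definition psi_peak :: "nat \<Rightarrow> int" where
  "psi_peak n = \<lfloor>(real n + 1) / 2 - sqrt (real n + 1) / 2\<rfloor>"

definition psi_int_max :: "nat \<Rightarrow> real" where
  "psi_int_max n = max (psi n (psi_peak n)) (psi n (real_of_int (psi_peak n) + 1))"

lemma psi_peak_bounds:
  "0 \<le> psi_peak n"
  "real_of_int (psi_peak n) \<le> (real n + 1 - sqrt (real n + 1)) / 2"
  "(real n + 1 - sqrt (real n + 1)) / 2 < real_of_int (psi_peak n) + 1"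
  "real_of_int (psi_peak n) + 1 \<le> real n + 1"
proof -
  define q where "q = sqrt (real n + 1)"
  have "1 \<le> q"
    unfolding q_def by simp
  have floor: "real_of_int (psi_peak n) \<le> (real n + 1 - q) / 2"
    "(real n + 1 - q) / 2 < real_of_int (psi_peak n) + 1"
    unfolding psi_peak_def q_def by (simp_all add: diff_divide_distrib)
  then show "real_of_int (psi_peak n) \<le> (real n + 1 - sqrt (real n + 1)) / 2"
    "(real n + 1 - sqrt (real n + 1)) / 2 < real_of_int (psi_peak n) + 1"
    unfolding q_def by simp_all
  have "2 * real_of_int (psi_peak n) \<le> real n + 1 - q"
    using floor(1) by (simp add: field_simps)
  then show "real_of_int (psi_peak n) + 1 \<le> real n + 1"
    using \<open>1 \<le> q\<close> by linarith
  have "0 \<le> (real n + 1) / 2 - sqrt (real n + 1) / 2"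
    using sqrt_Suc_le[of n] by simp
  then show "0 \<le> psi_peak n"
    unfolding psi_peak_def by simp
qed

lemma psi_le_psi_int_max:
  fixes k :: int
  assumes "0 \<le> k" "real_of_int k \<le> real n + 1"
  shows "psi n k \<le> psi_int_max n"
proof -
  define a where "a = psi_peak n"
  note bounds = psi_peak_bounds[of n, folded a_def]
  obtain j :: int where j: "0 \<le> j" "2 * real_of_int j \<le> real n + 1" "psi n j = psi n k"
  proof (cases "2 * real_of_int k \<le> real n + 1")
    case True
    then show ?thesis
      using assms that[of k] by simp
  next
    case False
    then show ?thesis
      using assms psi_symmetric[of n k] that[of "int n + 1 - k"] by simp
  qed
  show ?thesis
  proof (cases "j \<le> a")
    case True
    then have "psi n j \<le> psi n a"
      using j bounds by (intro psi_mono_below_peak) simp_all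
    then show ?thesis
      using j unfolding psi_int_max_def a_def by simp
  next
    case False
    then have "psi n j \<le> psi n (real_of_int a + 1)"
      using j bounds by (intro psi_antimono_above_peak) simp_all
    then show ?thesis
      using j unfolding psi_int_max_def a_def by simp
  qed
qed

lemma psi_int_max_le_sqrt: "psi_int_max n \<le> sqrt (real n + 1)"
proof -
  note bounds = psi_peak_bounds[of n]
  have "psi n (psi_peak n) \<le> sqrt (real n + 1)"
    using bounds by (intro psi_le_sqrt) simp_all
  moreover have "psi n (real_of_int (psi_peak n) + 1) \<le> sqrt (real n + 1)"
    using bounds by (intro psi_le_sqrt) simp_all
  ultimately show ?thesis
    unfolding psi_int_max_def by simp
qed

lemma psi_int_max_one: "psi_int_max 1 = 1"
proof -
  have "sqrt 2 < sqrt (2^2)"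
    by (simp only: real_sqrt_less_iff) simp
  then have "sqrt 2 < 2"
    by simp
  then have "psi_peak 1 = 0"
    unfolding psi_peak_def by (simp add: floor_eq_iff)
  then show ?thesis
    unfolding psi_int_max_def psi_def by simp
qed

lemma sqrt_less_psi_int_max:
  assumes "2 \<le> n"
  shows "sqrt (real n) < psi_int_max n"
proof -
  define m a e where "m = real n + 1" and "a = psi_peak n" and "e = m / 2 - real_of_int a"
  note bounds = psi_peak_bounds[of n, folded a_def m_def]
  have "1 < sqrt (real n)"
    using assms by simp
  have "sqrt m < 2 * sqrt (real n)"
  proof -
    have "sqrt m < sqrt (4 * real n)"
      using assms unfolding m_def by simp
    then show ?thesis
      by (simp add: real_sqrt_mult)
  qed
  have "sqrt m / 2 \<le> e" "e < sqrt m / 2 + 1"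
    using bounds unfolding e_def by (simp_all add: field_simps)
  have "0 < sqrt m"
    unfolding m_def by simp
  show ?thesis
  proof (cases "e < sqrt (real n)")
    case True
    have "0 < e"
      using \<open>0 < sqrt m\<close> \<open>sqrt m / 2 \<le> e\<close> by linarith
    then have "\<bar>(real n + 1) / 2 - real_of_int a\<bar> = e"
      unfolding e_def m_def by simp
    then have "sqrt (real n) < psi n a"
      using bounds(1,4) True \<open>0 < e\<close> by (intro sqrt_less_psi) (simp_all add: m_def)
    then show ?thesis
      unfolding psi_int_max_def a_def by simp
  next
    case False
    have "0 < e - 1" "e - 1 < sqrt (real n)"
      using False \<open>1 < sqrt (real n)\<close> \<open>sqrt m < 2 * sqrt (real n)\<close> \<open>e < sqrt m / 2 + 1\<close>
      by linarith+
    moreover have "\<bar>(real n + 1) / 2 - (real_of_int a + 1)\<bar> = e - 1"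
      using \<open>0 < e - 1\<close> unfolding e_def m_def by simp
    ultimately have "sqrt (real n) < psi n (real_of_int a + 1)"
      using bounds(1,4) by (intro sqrt_less_psi) (simp_all add: m_def)
    then show ?thesis
      unfolding psi_int_max_def a_def by simp
  qed
qed

lemma psi_int_max_eq_sqrt_iff:
  "psi_int_max n = sqrt (real n + 1) \<longleftrightarrow> sqrt (real n + 1) \<in> \<int>"
proof
  define a where "a = psi_peak n"
  note bounds = psi_peak_bounds[of n, folded a_def]
  assume "psi_int_max n = sqrt (real n + 1)"
  then obtain k :: int where "k \<in> {a, a + 1}" "psi n k = sqrt (real n + 1)"
    unfolding psi_int_max_def a_def by (metis insertCI max_def of_int_1 of_int_add)
  then have "(real n + 1 - 2 * real_of_int k)^2 = real n + 1"
    using bounds by (subst psi_eq_sqrt_iff[symmetric]) auto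
  then have "sqrt (real n + 1) = \<bar>real n + 1 - 2 * real_of_int k\<bar>"
    by (metis real_sqrt_abs)
  then show "sqrt (real n + 1) \<in> \<int>"
    by simp
next
  assume "sqrt (real n + 1) \<in> \<int>"
  then obtain q :: int where q: "sqrt (real n + 1) = q"
    by (auto elim: Ints_cases)
  have "real n + 1 = (sqrt (real n + 1))^2"
    by simp
  then have "real n + 1 = (real_of_int q)^2"
    unfolding q .
  have "even (q * (q - 1))"
    by simp
  then obtain z where z: "q * (q - 1) = 2 * z"
    by (rule evenE)
  have "(real n + 1) / 2 - sqrt (real n + 1) / 2 = ((real_of_int q)^2 - q) / 2"
    unfolding q using \<open>real n + 1 = (real_of_int q)^2\<close> by simp
  also have "\<dots> = z"
    using arg_cong[OF z, of real_of_int] by (simp add: power2_eq_square algebra_simps)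
  finally have "(real n + 1) / 2 - sqrt (real n + 1) / 2 = z" .
  then have "psi_peak n = z"
    unfolding psi_peak_def by simp
  then have "(real n + 1 - 2 * real_of_int (psi_peak n))^2 = real n + 1"
    using arg_cong[OF z, of real_of_int] \<open>real n + 1 = (real_of_int q)^2\<close>
    by (simp add: power2_eq_square algebra_simps)
  then have "psi n (psi_peak n) = sqrt (real n + 1)"
    using psi_peak_bounds[of n] by (subst psi_eq_sqrt_iff) simp_all
  then show "psi_int_max n = sqrt (real n + 1)"
    using psi_int_max_le_sqrt[of n] unfolding psi_int_max_def by simp
qed

lemma psi_int_max_attained:
  obtains k :: nat where "k \<le> n + 1" "psi n (real k) = psi_int_max n"
proof -
  define k where "k = nat (psi_peak n)"
  have "real k = real_of_int (psi_peak n)" "k + 1 \<le> n + 1"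
    using psi_peak_bounds[of n] unfolding k_def by simp_all
  then have "psi_int_max n = psi n (real k) \<or> psi_int_max n = psi n (real (k + 1))"
    unfolding psi_int_max_def by (simp add: max_def add.commute)
  then show ?thesis
    using that[of k] that[of "k + 1"] \<open>k + 1 \<le> n + 1\<close> by fastforce
qed

section \<open>The interpolation projector of an inscribed regular simplex\<close>

lemma Pi1_eq_on_affine_hull:
  fixes p q :: "real^'n \<Rightarrow> real"
  assumes "p \<in> Pi1" "q \<in> Pi1" "\<forall>y\<in>S. p y = q y" "y \<in> affine hull S"
  shows "p y = q y"
proof -
  obtain a b a' b' where p: "p = (\<lambda>y. a \<bullet> y + b)" and q: "q = (\<lambda>y. a' \<bullet> y + b')"
    using assms(1,2) unfolding Pi1_def by blast
  have "S \<subseteq> {y. (a - a') \<bullet> y = b' - b}"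
    using assms(3) unfolding p q by (auto simp: inner_diff_left algebra_simps)
  then have "affine hull S \<subseteq> {y. (a - a') \<bullet> y = b' - b}"
    by (intro hull_minimal affine_hyperplane)
  then show ?thesis
    using assms(4) unfolding p q by (auto simp: inner_diff_left algebra_simps)
qed

lemma abs_affine_le_on_cball:
  fixes a c y :: "'a::real_inner"
  assumes "y \<in> cball c r"
  shows "\<bar>a \<bullet> (y - c) + b\<bar> \<le> \<bar>b\<bar> + r * norm a"
proof -
  have "\<bar>a \<bullet> (y - c)\<bar> \<le> norm a * norm (y - c)"
    by (rule Cauchy_Schwarz_ineq2)
  also have "\<dots> \<le> norm a * r"
    using assms by (intro mult_left_mono) (auto simp: dist_norm norm_minus_commute)
  finally show ?thesis
    by (simp add: mult.commute)
qed

lemma abs_affine_attains_on_cball: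
  fixes a c :: "'a::real_inner"
  assumes "0 \<le> r"
  obtains y where "y \<in> cball c r" "\<bar>a \<bullet> (y - c) + b\<bar> = \<bar>b\<bar> + r * norm a"
proof (cases "a = 0")
  case True
  then show ?thesis
    using assms that[of c] by simp
next
  case False
  define \<epsilon> :: real where "\<epsilon> = (if 0 \<le> b then 1 else -1)"
  define y where "y = c + (\<epsilon> * r / norm a) *\<^sub>R a"
  have "y \<in> cball c r"
    using assms False unfolding y_def \<epsilon>_def by (simp add: dist_norm abs_mult)
  have "a \<bullet> (y - c) = \<epsilon> * r * norm a"
    using False unfolding y_def by (simp add: power2_norm_eq_inner[symmetric] power2_eq_square)
  moreover have "0 \<le> r * norm a"
    using assms by simp
  ultimately have "\<bar>a \<bullet> (y - c) + b\<bar> = \<bar>b\<bar> + r * norm a"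
    unfolding \<epsilon>_def by auto
  with \<open>y \<in> cball c r\<close> show ?thesis
    by (rule that)
qed

lemma proj_norm_eqI:
  assumes "B \<noteq> {}"
    and upper: "\<And>f y. \<forall>y\<in>B. \<bar>f y\<bar> \<le> 1 \<Longrightarrow> y \<in> B \<Longrightarrow> \<bar>interp x f y\<bar> \<le> M"
    and attained: "continuous_on B f" "\<forall>y\<in>B. \<bar>f y\<bar> \<le> 1" "y \<in> B" "M \<le> \<bar>interp x f y\<bar>"
  shows "proj_norm x B = M"
proof -
  define S where "S = {Sup ((\<lambda>y. \<bar>interp x f y\<bar>) ` B) | f.
      continuous_on B f \<and> (\<forall>y\<in>B. \<bar>f y\<bar> \<le> 1)}"
  have sup_le: "Sup ((\<lambda>y. \<bar>interp x g y\<bar>) ` B) \<le> M" if "\<forall>y\<in>B. \<bar>g y\<bar> \<le> 1" for g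
    using assms(1) upper[OF that] by (intro cSup_least) auto
  have "Sup ((\<lambda>y. \<bar>interp x f y\<bar>) ` B) \<in> S"
    unfolding S_def using attained(1,2) by blast
  moreover have "M \<le> Sup ((\<lambda>y. \<bar>interp x f y\<bar>) ` B)"
    using attained upper[OF attained(2)]
    by (intro cSup_upper2[where x="\<bar>interp x f y\<bar>"] bdd_aboveI[where M=M]) auto
  moreover have "bdd_above S"
    unfolding S_def using sup_le by (intro bdd_aboveI[where M=M]) auto
  ultimately have "M \<le> Sup S"
    by (meson cSup_upper order_trans)
  moreover have "Sup S \<le> M"
    using \<open>Sup ((\<lambda>y. \<bar>interp x f y\<bar>) ` B) \<in> S\<close> sup_le unfolding S_def
    by (intro cSup_least) auto
  ultimately show ?thesis
    unfolding proj_norm_def S_def[symmetric] by simp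
qed

definition signs :: "nat set \<Rightarrow> nat \<Rightarrow> real" where
  "signs J j = (if j \<in> J then 1 else -1)"

lemma sum_signs_scaleR:
  fixes g :: "nat \<Rightarrow> 'a::real_vector"
  assumes "finite A" "J \<subseteq> A"
  shows "(\<Sum>j\<in>A. signs J j *\<^sub>R g j) = 2 *\<^sub>R sum g J - sum g A"
proof -
  have "(\<Sum>j\<in>A. signs J j *\<^sub>R g j) = (\<Sum>j\<in>A. if j \<in> J then g j else - g j)"
    by (rule sum.cong) (simp_all add: signs_def)
  also have "\<dots> = sum g J + sum (\<lambda>j. - g j) (A - J)"
    using assms by (simp add: sum.If_cases Int_absorb1 Diff_eq)
  also have "\<dots> = sum g J - sum g (A - J)"
    by (simp add: sum_negf)
  also have "sum g (A - J) = sum g A - sum g J"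
    using assms by (simp add: sum_diff finite_subset)
  finally show ?thesis
    by (simp add: scaleR_2)
qed

locale inscribed_regular_simplex =
  fixes c :: "real^'n" and r :: real and x :: "nat \<Rightarrow> real^'n"
  assumes radius_pos: "0 < r" and regular: "regular_simplex x" and inscribed: "inscribed x c r"
begin

definition v :: "nat \<Rightarrow> real^'n" where
  "v j = x j - c"

lemma vertex_in_cball: "j \<le> CARD('n) \<Longrightarrow> x j \<in> cball c r"
  using inscribed unfolding inscribed_def by auto

lemma inner_v_self: "j \<le> CARD('n) \<Longrightarrow> v j \<bullet> v j = r^2"
  using inscribed unfolding inscribed_def v_def
  by (simp add: dist_norm norm_minus_commute power2_norm_eq_inner[symmetric])

lemma inner_v_eq_inner_v:
  assumes "i \<le> CARD('n)" "j \<le> CARD('n)" "k \<le> CARD('n)" "l \<le> CARD('n)" "i \<noteq> j" "k \<noteq> l"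
  shows "v i \<bullet> v j = v k \<bullet> v l"
proof -
  have dist_sq: "(dist (x p) (x q))^2 = 2 * r^2 - 2 * (v p \<bullet> v q)"
    if "p \<le> CARD('n)" "q \<le> CARD('n)" for p q
  proof -
    have "(dist (x p) (x q))^2 = (v p - v q) \<bullet> (v p - v q)"
      unfolding v_def dist_norm power2_norm_eq_inner by simp
    also have "\<dots> = v p \<bullet> v p + v q \<bullet> v q - 2 * (v p \<bullet> v q)"
      by (simp add: inner_diff_left inner_diff_right inner_commute)
    finally show ?thesis
      using inner_v_self that by simp
  qed
  have "dist (x i) (x j) = dist (x k) (x l)"
    using regular assms unfolding regular_simplex_def by blast
  then show ?thesis
    using dist_sq[of i j] dist_sq[of k l] assms by simp
qed

lemma affine_hull_vertices: "affine hull (x ` {..CARD('n)}) = UNIV"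
proof -
  have inj: "inj_on x {..CARD('n)}" and indep: "\<not> affine_dependent (x ` {..CARD('n)})"
    using regular unfolding regular_simplex_def nondeg_simplex_def by auto
  have "int (card (x ` {..CARD('n)})) = aff_dim (x ` {..CARD('n)}) + 1"
    using indep by (rule aff_dim_affine_independent)
  moreover have "card (x ` {..CARD('n)}) = CARD('n) + 1"
    using inj by (simp add: card_image)
  ultimately have "aff_dim (x ` {..CARD('n)}) = int DIM(real^'n)"
    by simp
  then show ?thesis
    by (rule aff_dim_eq_full[THEN iffD1])
qed

lemma Pi1_eqI_vertices:
  assumes "p \<in> Pi1" "q \<in> Pi1" "\<And>j. j \<le> CARD('n) \<Longrightarrow> p (x j) = q (x j)"
  shows "p = q"
proof
  fix y :: "real^'n"
  have "\<forall>z\<in>x ` {..CARD('n)}. p z = q z"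
    using assms(3) by auto
  moreover have "y \<in> affine hull (x ` {..CARD('n)})"
    unfolding affine_hull_vertices ..
  ultimately show "p y = q y"
    by (rule Pi1_eq_on_affine_hull[OF assms(1,2)])
qed

lemma sum_v_inner_v:
  assumes "i \<le> CARD('n)"
  shows "(\<Sum>j\<le>CARD('n). v j) \<bullet> v i = r^2 + real CARD('n) * (v 0 \<bullet> v 1)"
proof -
  have "(\<Sum>j\<le>CARD('n). v j) \<bullet> v i = (\<Sum>j\<le>CARD('n). v j \<bullet> v i)"
    by (simp add: inner_sum_left)
  also have "\<dots> = v i \<bullet> v i + (\<Sum>j\<in>{..CARD('n)} - {i}. v j \<bullet> v i)"
    using assms by (simp add: sum.remove)
  also have "(\<Sum>j\<in>{..CARD('n)} - {i}. v j \<bullet> v i) = (\<Sum>j\<in>{..CARD('n)} - {i}. v 0 \<bullet> v 1)"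
    using assms by (intro sum.cong) (auto intro: inner_v_eq_inner_v)
  finally show ?thesis
    using assms inner_v_self by simp
qed

text \<open>The affine function y \<mapsto> (\<Sum>j. v j) \<bullet> (y - c) - (r^2 + n * v 0 \<bullet> v 1) vanishes at all
  vertices, hence everywhere; evaluating it at c and at c + \<Sum>j. v j gives both facts.\<close>
lemma sum_v_eq_0: "(\<Sum>j\<le>CARD('n). v j) = 0"
  and inner_v_0_1: "v 0 \<bullet> v 1 = - (r^2) / real CARD('n)"
proof -
  define s where "s = (\<Sum>j\<le>CARD('n). v j)"
  define \<kappa> where "\<kappa> = r^2 + real CARD('n) * (v 0 \<bullet> v 1)"
  have affine_zero: "(\<lambda>y. s \<bullet> y + (- (s \<bullet> c) - \<kappa>)) = (\<lambda>y. 0 \<bullet> y + 0)"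
  proof (rule Pi1_eqI_vertices)
    show "(\<lambda>y. s \<bullet> y + (- (s \<bullet> c) - \<kappa>)) \<in> Pi1" "(\<lambda>y. 0 \<bullet> y + 0) \<in> Pi1"
      unfolding Pi1_def by blast+
    show "s \<bullet> x j + (- (s \<bullet> c) - \<kappa>) = 0 \<bullet> x j + 0" if "j \<le> CARD('n)" for j
      using sum_v_inner_v[OF that] unfolding s_def \<kappa>_def v_def by (simp add: inner_diff_right)
  qed
  have vanish: "s \<bullet> (y - c) = \<kappa>" for y
    using fun_cong[OF affine_zero, of y] by (simp add: inner_diff_right)
  have "\<kappa> = 0"
    using vanish[of c] by simp
  then show "v 0 \<bullet> v 1 = - (r^2) / real CARD('n)"
    unfolding \<kappa>_def by (simp add: field_simps)
  show "s = 0"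
    using vanish[of "c + s"] \<open>\<kappa> = 0\<close> by simp
qed

lemma inner_v_distinct:
  "i \<le> CARD('n) \<Longrightarrow> j \<le> CARD('n) \<Longrightarrow> i \<noteq> j \<Longrightarrow> v i \<bullet> v j = - (r^2) / real CARD('n)"
  using inner_v_eq_inner_v[of i j 0 1] inner_v_0_1 by simp

definition bary :: "nat \<Rightarrow> real^'n \<Rightarrow> real" where
  "bary j y = (1 + real CARD('n) / r^2 * (v j \<bullet> (y - c))) / (real CARD('n) + 1)"

lemma bary_vertex:
  assumes "i \<le> CARD('n)" "j \<le> CARD('n)"
  shows "bary j (x i) = (if i = j then 1 else 0)"
proof (cases "i = j")
  case True
  then show ?thesis
    using assms inner_v_self[of j] radius_pos unfolding bary_def v_def by simp
next
  case False
  then show ?thesis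
    using assms inner_v_distinct[of j i] radius_pos unfolding bary_def v_def by simp
qed

definition lagrange :: "(nat \<Rightarrow> real) \<Rightarrow> real^'n \<Rightarrow> real" where
  "lagrange \<sigma> y = (\<Sum>j\<le>CARD('n). \<sigma> j * bary j y)"

lemma lagrange_affine:
  "lagrange \<sigma> y = (real CARD('n) / (r^2 * (real CARD('n) + 1))) *\<^sub>R (\<Sum>j\<le>CARD('n). \<sigma> j *\<^sub>R v j)
      \<bullet> (y - c) + (\<Sum>j\<le>CARD('n). \<sigma> j) / (real CARD('n) + 1)"
proof -
  define K where "K = real CARD('n) / (r^2 * (real CARD('n) + 1))"
  have "bary j y = K * (v j \<bullet> (y - c)) + 1 / (real CARD('n) + 1)" for j
    unfolding bary_def K_def by (simp add: add_divide_distrib)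
  then have "lagrange \<sigma> y = K * (\<Sum>j\<le>CARD('n). \<sigma> j * (v j \<bullet> (y - c)))
      + (\<Sum>j\<le>CARD('n). \<sigma> j) / (real CARD('n) + 1)"
    unfolding lagrange_def
    by (simp add: distrib_left sum.distrib sum_distrib_left sum_divide_distrib mult.left_commute)
  then show ?thesis
    unfolding K_def by (simp add: inner_sum_left)
qed

lemma lagrange_in_Pi1: "lagrange \<sigma> \<in> Pi1"
proof -
  define a where "a = (real CARD('n) / (r^2 * (real CARD('n) + 1))) *\<^sub>R (\<Sum>j\<le>CARD('n). \<sigma> j *\<^sub>R v j)"
  have "lagrange \<sigma> = (\<lambda>y. a \<bullet> y + ((\<Sum>j\<le>CARD('n). \<sigma> j) / (real CARD('n) + 1) - a \<bullet> c))"
    unfolding lagrange_affine[abs_def] a_def[symmetric] by (simp add: inner_diff_right algebra_simps)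
  then show ?thesis
    unfolding Pi1_def by blast
qed

lemma lagrange_vertex: "i \<le> CARD('n) \<Longrightarrow> lagrange \<sigma> (x i) = \<sigma> i"
  unfolding lagrange_def by (simp add: bary_vertex if_distrib cong: if_cong)

lemma interp_eq_lagrange: "interp x f = lagrange (\<lambda>j. f (x j))"
  unfolding interp_def
proof (rule the_equality)
  show "lagrange (\<lambda>j. f (x j)) \<in> Pi1 \<and> (\<forall>j\<le>CARD('n). lagrange (\<lambda>j. f (x j)) (x j) = f (x j))"
    using lagrange_in_Pi1 lagrange_vertex by simp
  show "p = lagrange (\<lambda>j. f (x j))" if "p \<in> Pi1 \<and> (\<forall>j\<le>CARD('n). p (x j) = f (x j))" for p
    using that lagrange_in_Pi1 lagrange_vertex by (intro Pi1_eqI_vertices) auto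
qed

lemma norm_sum_v_sq:
  assumes "J \<subseteq> {..CARD('n)}"
  shows "real CARD('n) * (norm (\<Sum>j\<in>J. v j))^2
    = r^2 * real (card J) * (real CARD('n) + 1 - real (card J))"
proof -
  have "finite J"
    using assms finite_subset by blast
  have row: "(\<Sum>j\<in>J. v j \<bullet> v i) = r^2 - (real (card J) - 1) * r^2 / real CARD('n)"
    if "i \<in> J" for i
  proof -
    have "0 < card J"
      using \<open>finite J\<close> that by (auto simp: card_gt_0_iff)
    then have card_rest: "real (card (J - {i})) = real (card J) - 1"
      using \<open>finite J\<close> that by (simp add: card_Diff_singleton of_nat_diff)
    have "(\<Sum>j\<in>J. v j \<bullet> v i) = v i \<bullet> v i + (\<Sum>j\<in>J - {i}. v j \<bullet> v i)"
      using \<open>finite J\<close> that by (simp add: sum.remove)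
    also have "\<dots> = r^2 + (\<Sum>j\<in>J - {i}. - (r^2) / real CARD('n))"
      using assms that by (auto simp: inner_v_self inner_v_distinct subset_iff intro!: sum.cong)
    finally show ?thesis
      by (simp add: card_rest field_simps)
  qed
  have "(norm (\<Sum>j\<in>J. v j))^2 = (\<Sum>i\<in>J. \<Sum>j\<in>J. v j \<bullet> v i)"
    unfolding power2_norm_eq_inner by (simp add: inner_sum_left inner_sum_right)
  also have "\<dots> = real (card J) * (r^2 - (real (card J) - 1) * r^2 / real CARD('n))"
    using row by simp
  finally show ?thesis
    by (simp add: field_simps)
qed

lemma norm_sum_v:
  assumes "J \<subseteq> {..CARD('n)}"
  shows "norm (\<Sum>j\<in>J. v j)
    = r * sqrt (real (card J) * (real CARD('n) + 1 - real (card J))) / sqrt (real CARD('n))"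
proof -
  define n k where "n = real CARD('n)" and "k = real (card J)"
  have "0 < n"
    unfolding n_def by simp
  then have "(norm (\<Sum>j\<in>J. v j))^2 = r^2 * (k * (n + 1 - k)) / n"
    using norm_sum_v_sq[OF assms] unfolding n_def k_def by (simp add: field_simps)
  then have "norm (\<Sum>j\<in>J. v j) = sqrt (r^2 * (k * (n + 1 - k)) / n)"
    by (simp add: real_sqrt_unique)
  also have "\<dots> = r * sqrt (k * (n + 1 - k)) / sqrt n"
    using radius_pos by (simp add: real_sqrt_mult real_sqrt_divide)
  finally show ?thesis
    unfolding n_def k_def .
qed

lemma lagrange_signs_affine:
  assumes "J \<subseteq> {..CARD('n)}"
  obtains a b where "\<And>y. lagrange (signs J) y = a \<bullet> (y - c) + b"
    and "\<bar>b\<bar> + r * norm a = psi CARD('n) (real (card J))"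
proof -
  define n k w where "n = real CARD('n)" and "k = real (card J)" and "w = (\<Sum>j\<in>J. v j)"
  define a where "a = (2 * n / (r^2 * (n + 1))) *\<^sub>R w"
  define b where "b = (2 * k - (n + 1)) / (n + 1)"
  have "(\<Sum>j\<le>CARD('n). signs J j *\<^sub>R v j) = 2 *\<^sub>R w"
    using sum_signs_scaleR[OF _ assms, of v] sum_v_eq_0 unfolding w_def by simp
  moreover have "(\<Sum>j\<le>CARD('n). signs J j) = 2 * k - (n + 1)"
    using sum_signs_scaleR[OF _ assms, of "\<lambda>_. 1::real"] unfolding k_def n_def by simp
  ultimately have "lagrange (signs J) y = a \<bullet> (y - c) + b" for y
    unfolding lagrange_affine a_def b_def n_def by (simp add: field_simps)
  moreover have "\<bar>b\<bar> + r * norm a = psi CARD('n) k"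
  proof -
    have "0 < n"
      unfolding n_def by simp
    have "r * norm a = 2 * n / (r * (n + 1)) * norm w"
      unfolding a_def using radius_pos \<open>0 < n\<close> by (simp add: power2_eq_square)
    also have "\<dots> = 2 * (n / sqrt n) / (n + 1) * sqrt (k * (n + 1 - k))"
      unfolding w_def norm_sum_v[OF assms] n_def[symmetric] k_def[symmetric]
      using radius_pos by (simp add: ac_simps)
    also have "n / sqrt n = sqrt n"
      using \<open>0 < n\<close> by (simp add: real_div_sqrt)
    finally have "r * norm a = 2 * sqrt n / (n + 1) * sqrt (k * (n + 1 - k))"
      by simp
    moreover have "\<bar>b\<bar> = \<bar>1 - 2 * k / (n + 1)\<bar>"
      unfolding b_def n_def by (simp add: field_simps abs_minus_commute)
    ultimately show ?thesis
      unfolding psi_def n_def by simp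
  qed
  ultimately show ?thesis
    using that unfolding k_def by blast
qed

lemma abs_lagrange_le_psi_int_max:
  assumes "\<And>j. j \<le> CARD('n) \<Longrightarrow> \<bar>\<sigma> j\<bar> \<le> 1" "y \<in> cball c r"
  shows "\<bar>lagrange \<sigma> y\<bar> \<le> psi_int_max CARD('n)"
proof -
  define J where "J = {j. j \<le> CARD('n) \<and> 0 \<le> bary j y}"
  have "J \<subseteq> {..CARD('n)}"
    unfolding J_def by auto
  then obtain a b where lag: "\<And>y. lagrange (signs J) y = a \<bullet> (y - c) + b"
    and ab: "\<bar>b\<bar> + r * norm a = psi CARD('n) (real (card J))"
    using lagrange_signs_affine by blast
  have "\<bar>lagrange \<sigma> y\<bar> \<le> (\<Sum>j\<le>CARD('n). \<bar>\<sigma> j\<bar> * \<bar>bary j y\<bar>)"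
    unfolding lagrange_def by (rule order_trans[OF sum_abs]) (simp add: abs_mult)
  also have "\<dots> \<le> (\<Sum>j\<le>CARD('n). signs J j * bary j y)"
    using assms(1) by (intro sum_mono) (auto simp: J_def signs_def intro: mult_left_le_one_le)
  also have "\<dots> = a \<bullet> (y - c) + b"
    using lag unfolding lagrange_def by simp
  also have "\<dots> \<le> psi CARD('n) (real (card J))"
    using abs_affine_le_on_cball[OF assms(2), of a b] ab by simp
  also have "\<dots> \<le> psi_int_max CARD('n)"
    using psi_le_psi_int_max[of "int (card J)"] card_mono[OF _ \<open>J \<subseteq> {..CARD('n)}\<close>] by simp
  finally show ?thesis .
qed

lemma proj_norm_eq_psi_int_max: "proj_norm x (cball c r) = psi_int_max CARD('n)"
proof -
  obtain k where "k \<le> CARD('n) + 1" and k: "psi CARD('n) (real k) = psi_int_max CARD('n)"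
    by (rule psi_int_max_attained)
  define J where "J = {..<k}"
  have "J \<subseteq> {..CARD('n)}" "card J = k"
    using \<open>k \<le> CARD('n) + 1\<close> unfolding J_def by auto
  then obtain a b where lag: "\<And>y. lagrange (signs J) y = a \<bullet> (y - c) + b"
    and ab: "\<bar>b\<bar> + r * norm a = psi CARD('n) (real k)"
    using lagrange_signs_affine by metis
  have "0 \<le> r"
    using radius_pos by simp
  then obtain y where "y \<in> cball c r" and y: "\<bar>a \<bullet> (y - c) + b\<bar> = \<bar>b\<bar> + r * norm a"
    by (rule abs_affine_attains_on_cball)
  define f where "f z = max (-1) (min 1 (lagrange (signs J) z))" for z
  have "continuous_on (cball c r) f"
    unfolding f_def lag by (intro continuous_intros)
  moreover have "\<forall>z\<in>cball c r. \<bar>f z\<bar> \<le> 1"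
    unfolding f_def by auto
  moreover have "interp x f = lagrange (signs J)"
  proof -
    have "f (x j) = signs J j" if "j \<le> CARD('n)" for j
      unfolding f_def lagrange_vertex[OF that] by (simp add: signs_def)
    then show ?thesis
      unfolding interp_eq_lagrange lagrange_def[abs_def] by simp
  qed
  then have "psi_int_max CARD('n) \<le> \<bar>interp x f y\<bar>"
    using y ab k lag by simp
  moreover have "\<bar>interp x g z\<bar> \<le> psi_int_max CARD('n)"
    if "\<forall>z\<in>cball c r. \<bar>g z\<bar> \<le> 1" "z \<in> cball c r" for g z
    unfolding interp_eq_lagrange using that vertex_in_cball
    by (intro abs_lagrange_le_psi_int_max) auto
  moreover have "cball c r \<noteq> {}"
    using radius_pos by simp
  ultimately show ?thesis
    using \<open>y \<in> cball c r\<close> by (intro proj_norm_eqI[of _ _ _ f y])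
qed

end

theorem theorem11p2:
  fixes c :: "real^'n" and r :: real and x :: "nat \<Rightarrow> real^'n"
  assumes "r > 0"
    and "regular_simplex x"
    and "inscribed x c r"
  defines "n \<equiv> CARD('n)"
  defines "a \<equiv> \<lfloor>(real n + 1) / 2 - sqrt (real n + 1) / 2\<rfloor>"
  defines "N \<equiv> proj_norm x (cball c r)"
  shows "N = max (psi n (real_of_int a)) (psi n (real_of_int a + 1))
    \<and> sqrt (real n) \<le> N \<and> N \<le> sqrt (real n + 1)
    \<and> (N = sqrt (real n) \<longleftrightarrow> n = 1)
    \<and> (N = sqrt (real n + 1) \<longleftrightarrow> sqrt (real n + 1) \<in> \<int>)"
proof -
  interpret inscribed_regular_simplex c r x
    using assms(1-3) by unfold_locales
  have N: "N = psi_int_max n"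
    unfolding N_def n_def by (rule proj_norm_eq_psi_int_max)
  have "1 \<le> n"
    unfolding n_def by (simp add: Suc_leI)
  then consider "n = 1" | "2 \<le> n"
    by linarith
  then have "sqrt (real n) \<le> N \<and> (N = sqrt (real n) \<longleftrightarrow> n = 1)"
  proof cases
    case 1
    then show ?thesis
      using N psi_int_max_one by simp
  next
    case 2
    then show ?thesis
      using N sqrt_less_psi_int_max[OF 2] by simp
  qed
  then show ?thesis
    using N psi_int_max_le_sqrt[of n] psi_int_max_eq_sqrt_iff[of n]
    unfolding a_def psi_int_max_def psi_peak_def by auto
qed

end
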